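(* Let $X$ be a compact metric space and $Y\subseteq X$ a nonempty subset, endowed with the induced metric. Then $d^{us}_{GH}(X,Y)=d_{GH}(X,Y)$.
   Context: For a metric space, $|xy|$ denotes distance. A set-valued map $f:X\rightrightarrows Y$ assigns to each $x\in X$ a nonempty $f(x)\subseteq Y$ and is identified with its graph. A correspondence between $X$ and $Y$ is a subset $R\subseteq X\times Y$ whose projections to $X$ and to $Y$ are both surjective, regarded as the set-valued map $x\mapsto R(x)=\{y:(x,y)\in R\}$; $R^{-1}=\{(y,x):(x,y)\in R\}$; $\mathcal R(X,Y)$ is the set of all correspondences. The distortion of a nonempty $\sigma\subseteq X\times Y$ is $\operatorname{dis}\sigma=\sup\{||xx'|-|yy'||:(x,y),(x',y')\in\sigma\}\in[0,\infty]$, and $d_{GH}(X,Y)=\frac12\inf\{\operatorname{dis}R:R\in\mathcal R(X,Y)\}$. A set-valued map $f$ is upper semicontinuous if for every $x$ and every open $U\supseteq f(x)$ there is a neighborhood $V$ of $x$ with $f(x')\subseteq U$ for all $x'\in V$. $\mathcal R_{us}(X,Y)$ is the set of $R\in\mathcal R(X,Y)$ with both $R$ and $R^{-1}$ upper semicontinuous, and $d^{us}_{GH}(X,Y)=\frac12\inf\{\operatorname{dis}R:R\in\mathcal R_{us}(X,Y)\}$. *)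

theory Defs
  imports "HOL-Analysis.Analysis"
begin

text \<open>Metric spaces are modelled as subsets X of a metric_space type with the induced metric.\<close>

definition distortion :: "('a::metric_space \<times> 'b::metric_space) set \<Rightarrow> ereal" where
  "distortion \<sigma> = Sup {ereal \<bar>dist x x' - dist y y'\<bar> | x y x' y'. (x, y) \<in> \<sigma> \<and> (x', y') \<in> \<sigma>}"

definition correspondences :: "'a set \<Rightarrow> 'b set \<Rightarrow> ('a \<times> 'b) set set" where
  "correspondences X Y = {R. R \<subseteq> X \<times> Y \<and> fst ` R = X \<and> snd ` R = Y}"

definition usc_on :: "'a::metric_space set \<Rightarrow> 'b::metric_space set \<Rightarrow> ('a \<times> 'b) set \<Rightarrow> bool" where
  "usc_on X Y R \<longleftrightarrow> (\<forall>x\<in>X. \<forall>U. openin (top_of_set Y) U \<and> R `` {x} \<subseteq> U \<longrightarrow>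
      (\<exists>V. openin (top_of_set X) V \<and> x \<in> V \<and> (\<forall>x'\<in>V. R `` {x'} \<subseteq> U)))"

definition us_correspondences :: "'a::metric_space set \<Rightarrow> 'b::metric_space set \<Rightarrow> ('a \<times> 'b) set set" where
  "us_correspondences X Y = {R \<in> correspondences X Y. usc_on X Y R \<and> usc_on Y X (converse R)}"

definition GH_dist :: "'a::metric_space set \<Rightarrow> 'b::metric_space set \<Rightarrow> ereal" where
  "GH_dist X Y = Inf (distortion ` correspondences X Y) / 2"

definition GH_dist_us :: "'a::metric_space set \<Rightarrow> 'b::metric_space set \<Rightarrow> ereal" where
  "GH_dist_us X Y = Inf (distortion ` us_correspondences X Y) / 2"

end

theory Submission
  imports Defs
begin

text \<open>
  Given a correspondence R and \<epsilon> > 0, total boundedness provides a finite S \<subseteq> R whose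
  projections are \<epsilon>-nets of X and of Y. Relate x and y whenever they lie \<epsilon>-close to the two
  ends of one pair of S. Since S is finite and the balls are closed, points near x lie only in
  balls that already contain x, so this correspondence is upper semicontinuous in both
  directions; and its distortion exceeds that of R by at most 4\<epsilon>.
\<close>

definition cthickening_rel :: "'a::metric_space set \<Rightarrow> 'b::metric_space set \<Rightarrow> ('a \<times> 'b) set
    \<Rightarrow> real \<Rightarrow> ('a \<times> 'b) set" where
  "cthickening_rel A B S e = (A \<times> B) \<inter> (\<Union>(p, q)\<in>S. cball p e \<times> cball q e)"

lemma converse_cthickening_rel:
  "converse (cthickening_rel A B S e) = cthickening_rel B A (converse S) e"
  by (auto simp: cthickening_rel_def)

lemma usc_on_cthickening_rel:
  assumes "finite S"
  shows "usc_on A B (cthickening_rel A B S e)"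
  unfolding usc_on_def
proof (intro ballI allI impI, elim conjE)
  fix x U
  assume x: "x \<in> A" and U: "cthickening_rel A B S e `` {x} \<subseteq> U"
  define V where "V = A \<inter> (\<Inter>(p, q)\<in>{s \<in> S. x \<notin> cball (fst s) e}. - cball p e)"
  have "openin (top_of_set A) V"
    unfolding V_def by (intro openin_open_Int open_INT) (auto simp: assms)
  moreover have "x \<in> V"
    using x by (auto simp: V_def)
  moreover have "cthickening_rel A B S e `` {x'} \<subseteq> U" if "x' \<in> V" for x'
  proof
    fix y
    assume "y \<in> cthickening_rel A B S e `` {x'}"
    then obtain p q where "(p, q) \<in> S" "x' \<in> cball p e" "y \<in> cball q e" "y \<in> B"
      by (auto simp: cthickening_rel_def)
    moreover from this \<open>x' \<in> V\<close> have "x \<in> cball p e"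
      by (force simp: V_def)
    ultimately have "(x, y) \<in> cthickening_rel A B S e"
      using x unfolding cthickening_rel_def by blast
    then show "y \<in> U"
      using U by blast
  qed
  ultimately show "\<exists>V. openin (top_of_set A) V \<and> x \<in> V \<and>
      (\<forall>x'\<in>V. cthickening_rel A B S e `` {x'} \<subseteq> U)"
    by blast
qed

lemma cthickening_rel_in_correspondences:
  assumes "S \<subseteq> A \<times> B"
    and "A \<subseteq> (\<Union>p\<in>fst ` S. cball p e)" and "B \<subseteq> (\<Union>q\<in>snd ` S. cball q e)"
  shows "cthickening_rel A B S e \<in> correspondences A B"
  unfolding correspondences_def
proof (intro CollectI conjI equalityI subsetI)
  fix x
  assume "x \<in> A"
  then obtain p q where "(p, q) \<in> S" "dist p x \<le> e"
    using assms(2) by force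
  moreover have "0 \<le> e"
    using \<open>dist p x \<le> e\<close> zero_le_dist order_trans by blast
  ultimately have "(x, q) \<in> cthickening_rel A B S e"
    using \<open>x \<in> A\<close> assms(1) by (auto simp: cthickening_rel_def intro!: bexI[of _ "(p, q)"])
  then show "x \<in> fst ` cthickening_rel A B S e"
    by force
next
  fix y
  assume "y \<in> B"
  then obtain p q where "(p, q) \<in> S" "dist q y \<le> e"
    using assms(3) by force
  moreover have "0 \<le> e"
    using \<open>dist q y \<le> e\<close> zero_le_dist order_trans by blast
  ultimately have "(p, y) \<in> cthickening_rel A B S e"
    using \<open>y \<in> B\<close> assms(1) by (auto simp: cthickening_rel_def intro!: bexI[of _ "(p, q)"])
  then show "y \<in> snd ` cthickening_rel A B S e"
    by force
qed (auto simp: cthickening_rel_def)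

lemma abs_dist_diff_le_dist_add_dist:
  fixes x x' p p' :: "'a::metric_space"
  shows "\<bar>dist x x' - dist p p'\<bar> \<le> dist x p + dist x' p'"
  by metric

lemma distortion_cthickening_rel_le:
  assumes "S \<subseteq> R"
  shows "distortion (cthickening_rel A B S e) \<le> distortion R + ereal (4 * e)"
  unfolding distortion_def[of "cthickening_rel A B S e"]
proof (rule Sup_least, clarify)
  fix x y x' y'
  assume "(x, y) \<in> cthickening_rel A B S e" "(x', y') \<in> cthickening_rel A B S e"
  then obtain p q p' q' where pq: "(p, q) \<in> S" "(p', q') \<in> S"
    and close: "dist p x \<le> e" "dist q y \<le> e" "dist p' x' \<le> e" "dist q' y' \<le> e"
    by (auto simp: cthickening_rel_def)
  have "\<bar>dist x x' - dist y y'\<bar> \<le> \<bar>dist p p' - dist q q'\<bar> + 4 * e"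
    using abs_dist_diff_le_dist_add_dist[of x x' p p'] abs_dist_diff_le_dist_add_dist[of y y' q q']
      close by (simp add: dist_commute)
  moreover have "ereal \<bar>dist p p' - dist q q'\<bar> \<le> distortion R"
    unfolding distortion_def using pq assms by (intro Sup_upper) blast
  ultimately show "ereal \<bar>dist x x' - dist y y'\<bar> \<le> distortion R + ereal (4 * e)"
    by (metis add_right_mono ereal_less_eq(3) order_trans plus_ereal.simps(1))
qed

lemma correspondence_finite_net:
  assumes "Met_TC.mtotally_bounded A" "Met_TC.mtotally_bounded B"
    and "R \<in> correspondences A B" and "e > 0"
  obtains S where "finite S" "S \<subseteq> R"
    "A \<subseteq> (\<Union>p\<in>fst ` S. cball p e)" "B \<subseteq> (\<Union>q\<in>snd ` S. cball q e)"
proof -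
  obtain KA where KA: "finite KA" "KA \<subseteq> A" "A \<subseteq> (\<Union>p\<in>KA. ball p e)"
    using assms(1,4) unfolding Met_TC.mtotally_bounded_def mball_eq_ball by meson
  obtain KB where KB: "finite KB" "KB \<subseteq> B" "B \<subseteq> (\<Union>q\<in>KB. ball q e)"
    using assms(2,4) unfolding Met_TC.mtotally_bounded_def mball_eq_ball by meson
  have "A \<subseteq> fst ` R" "B \<subseteq> snd ` R"
    using assms(3) by (auto simp: correspondences_def)
  then have "\<forall>p\<in>KA. \<exists>r\<in>R. fst r = p" "\<forall>q\<in>KB. \<exists>r\<in>R. snd r = q"
    using KA(2) KB(2) by blast+
  then obtain f g where f: "\<forall>p\<in>KA. f p \<in> R \<and> fst (f p) = p"
    and g: "\<forall>q\<in>KB. g q \<in> R \<and> snd (g q) = q"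
    by metis
  define S where "S = f ` KA \<union> g ` KB"
  have "KA \<subseteq> fst ` S" "KB \<subseteq> snd ` S"
    using f g unfolding S_def by (metis UnI1 UnI2 image_eqI subsetI)+
  then have "A \<subseteq> (\<Union>p\<in>fst ` S. cball p e)" "B \<subseteq> (\<Union>q\<in>snd ` S. cball q e)"
    using KA(3) KB(3) by (meson UN_mono ball_subset_cball order_trans)+
  moreover have "finite S" "S \<subseteq> R"
    using KA(1) KB(1) f g by (auto simp: S_def)
  ultimately show thesis
    using that by blast
qed

lemma us_correspondence_distortion_le:
  assumes "Met_TC.mtotally_bounded A" "Met_TC.mtotally_bounded B"
    and "R \<in> correspondences A B" and "e > 0"
  obtains R' where "R' \<in> us_correspondences A B" "distortion R' \<le> distortion R + ereal e"
proof -
  obtain S where S: "finite S" "S \<subseteq> R"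
    "A \<subseteq> (\<Union>p\<in>fst ` S. cball p (e / 4))" "B \<subseteq> (\<Union>q\<in>snd ` S. cball q (e / 4))"
    using correspondence_finite_net[OF assms(1-3)] assms(4)
    by (metis zero_less_divide_iff zero_less_numeral)
  have "S \<subseteq> A \<times> B"
    using S(2) assms(3) by (auto simp: correspondences_def)
  then have "cthickening_rel A B S (e / 4) \<in> us_correspondences A B"
    using S by (simp add: us_correspondences_def cthickening_rel_in_correspondences
        usc_on_cthickening_rel converse_cthickening_rel)
  moreover have "distortion (cthickening_rel A B S (e / 4)) \<le> distortion R + ereal e"
    using distortion_cthickening_rel_le[OF S(2), of A B "e / 4"] by simp
  ultimately show thesis
    using that by blast
qed

lemma GH_dist_us_eq_GH_dist_if_totally_bounded:
  assumes "Met_TC.mtotally_bounded A" "Met_TC.mtotally_bounded B"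
  shows "GH_dist_us A B = GH_dist A B"
proof -
  have "Inf (distortion ` correspondences A B) \<le> Inf (distortion ` us_correspondences A B)"
    by (rule Inf_superset_mono) (auto simp: us_correspondences_def)
  moreover have "Inf (distortion ` us_correspondences A B) \<le> distortion R"
    if R: "R \<in> correspondences A B" for R
  proof (rule ereal_le_epsilon2)
    fix e :: real
    assume "e > 0"
    then obtain R' where "R' \<in> us_correspondences A B" "distortion R' \<le> distortion R + ereal e"
      using us_correspondence_distortion_le[OF assms R] by blast
    then show "Inf (distortion ` us_correspondences A B) \<le> distortion R + ereal e"
      by (meson INF_lower order_trans)
  qed
  then have "Inf (distortion ` us_correspondences A B) \<le> Inf (distortion ` correspondences A B)"
    by (auto intro: Inf_greatest)
  ultimately show ?thesis
    unfolding GH_dist_us_def GH_dist_def by simp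
qed

theorem mainTheorem6:
  fixes X Y :: "'a::metric_space set"
  assumes "compact X" and "Y \<subseteq> X" and "Y \<noteq> {}"
  shows "GH_dist_us X Y = GH_dist X Y"
proof -
  have "Met_TC.mtotally_bounded X"
    using assms(1) by (simp add: Met_TC.compactin_imp_mtotally_bounded)
  moreover from this have "Met_TC.mtotally_bounded Y"
    using assms(2) by (rule Met_TC.mtotally_bounded_subset)
  ultimately show ?thesis
    by (rule GH_dist_us_eq_GH_dist_if_totally_bounded)
qed

end
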